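(* Let $\mathcal{L}_1:\mathcal{M}_{d_1}\to\mathcal{M}_{d_1}$ and $\mathcal{L}_2:\mathcal{M}_{d_2}\to\mathcal{M}_{d_2}$ be unital, reversible Liouvillians with almost commuting unitary eigenbases associated to finite abelian groups $G_1$ and $G_2$, and let $P^1_t$, $P^2_t$ be the associated classical semigroups acting on $V(G_1)$, $V(G_2)$. Then for all $t\geq0$, $$\|e^{t\mathcal{L}_1}\otimes e^{t\mathcal{L}_2}\|_{2\to4,\frac{\mathbb{1}}{d_1d_2}}\leq\|P^1_t\otimes P^2_t\|_{2\to4}.$$
   Context: A Liouvillian generates a semigroup of completely positive trace-preserving maps; unital: $\mathcal{L}(\mathbb{1})=0$; reversible: self-adjoint w.r.t. the Hilbert–Schmidt inner product. An almost commuting unitary eigenbasis of $\mathcal{L}$ on $\mathcal{M}_d$ associated to a finite abelian group $G$ ($|G|=d^2$) consists of unitaries $\{U_i\}_{i\in G}$ with $U_0=\mathbb{1}$, $\mathcal{L}(U_i)=\lambda_iU_i$, $\text{tr}(U_i^\dagger U_j)=d\delta_{ij}$, and $U_iU_j=\phi(i,j)U_jU_i=\phi'(i,j)U_{i+j}$ with unimodular phases. Fix an isomorphism $i\mapsto\chi_i$ of $G$ onto its character group. $V(G)$ = functions $G\to\mathbb{C}$, $\|f\|_p^p=\frac1{|G|}\sum_g|f(g)|^p$, $\hat f(i)=\frac1{|G|}\sum_g\overline{\chi_i(g)}f(g)$; the associated classical semigroup is $P_tf=\sum_i e^{\lambda_it}\hat f(i)\chi_i$. $V(G_1)\otimes V(G_2)\cong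 V(G_1\times G_2)$ with the corresponding norm; $\|A\|_{2\to4}=\sup_{f\ne0}\|Af\|_4/\|f\|_2$. On $\mathcal{M}_D$ ($D=d_1d_2$): $\|Y\|_{p,\frac{\mathbb{1}}{D}}=D^{-1/p}(\text{tr}|Y|^p)^{1/p}$ and $\|S\|_{2\to4,\frac{\mathbb{1}}{D}}=\sup_{X\ne0}\|S(X)\|_{4,\frac{\mathbb{1}}{D}}/\|X\|_{2,\frac{\mathbb{1}}{D}}$. *)

theory Defs
  imports "HOL-Analysis.Analysis"
begin

section \<open>Matrices M_d as complex^'n^'n, d = CARD('n)\<close>

definition cscale :: "complex \<Rightarrow> complex^'n^'m \<Rightarrow> complex^'n^'m" where
  "cscale c A = (\<chi> i j. c * A $ i $ j)"

definition adj :: "complex^'n^'m \<Rightarrow> complex^'m^'n" where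
  "adj A = (\<chi> i j. cnj (A $ j $ i))"

definition unitary_mat :: "complex^'n^'n \<Rightarrow> bool" where
  "unitary_mat U \<longleftrightarrow> U ** adj U = mat 1 \<and> adj U ** U = mat 1"

definition mat_unit :: "'n \<Rightarrow> 'n \<Rightarrow> complex^'n^'n" where
  "mat_unit a b = (\<chi> i j. if i = a \<and> j = b then 1 else 0)"

definition kron :: "complex^'n^'n \<Rightarrow> complex^'m^'m \<Rightarrow> complex^('n \<times> 'm)^('n \<times> 'm)" where
  "kron A B = (\<chi> p q. A $ fst p $ fst q * B $ snd p $ snd q)"

text \<open>Tensor product of two (linear) superoperators, determined by (S1 (x) S2)(A (x) B) = S1 A (x) S2 B.\<close>
definition super_tensor ::
  "(complex^'n^'n \<Rightarrow> complex^'n^'n) \<Rightarrow> (complex^'m^'m \<Rightarrow> complex^'m^'m)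
    \<Rightarrow> complex^('n \<times> 'm)^('n \<times> 'm) \<Rightarrow> complex^('n \<times> 'm)^('n \<times> 'm)" where
  "super_tensor S1 S2 X =
     (\<Sum>i\<in>UNIV. \<Sum>j\<in>UNIV. \<Sum>k\<in>UNIV. \<Sum>l\<in>UNIV.
        cscale (X $ (i, k) $ (j, l)) (kron (S1 (mat_unit i j)) (S2 (mat_unit k l))))"

definition clinear_so :: "(complex^'n^'n \<Rightarrow> complex^'n^'n) \<Rightarrow> bool" where
  "clinear_so L \<longleftrightarrow> (\<forall>X Y. L (X + Y) = L X + L Y) \<and> (\<forall>c X. L (cscale c X) = cscale c (L X))"

definition exp_so :: "real \<Rightarrow> (complex^'n^'n \<Rightarrow> complex^'n^'n) \<Rightarrow> complex^'n^'n \<Rightarrow> complex^'n^'n" where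
  "exp_so t L X = (\<Sum>n. (t ^ n / fact n) *\<^sub>R (L ^^ n) X)"

text \<open>Positive semidefiniteness of a block matrix in M_k(M_d) (blocks indexed by a, b < k).\<close>
definition psd_block :: "nat \<Rightarrow> (nat \<Rightarrow> nat \<Rightarrow> complex^'n^'n) \<Rightarrow> bool" where
  "psd_block k X \<longleftrightarrow> (\<forall>v :: nat \<Rightarrow> complex^'n.
     (let q = (\<Sum>a<k. \<Sum>b<k. \<Sum>i\<in>UNIV. \<Sum>j\<in>UNIV. cnj (v a $ i) * X a b $ i $ j * v b $ j)
      in Im q = 0 \<and> Re q \<ge> 0))"

definition completely_positive :: "(complex^'n^'n \<Rightarrow> complex^'n^'n) \<Rightarrow> bool" where
  "completely_positive \<Phi> \<longleftrightarrow>
     (\<forall>k X. psd_block k X \<longrightarrow> psd_block k (\<lambda>a b. \<Phi> (X a b)))"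

definition trace_preserving :: "(complex^'n^'n \<Rightarrow> complex^'n^'n) \<Rightarrow> bool" where
  "trace_preserving \<Phi> \<longleftrightarrow> (\<forall>X. trace (\<Phi> X) = trace X)"

definition liouvillian :: "(complex^'n^'n \<Rightarrow> complex^'n^'n) \<Rightarrow> bool" where
  "liouvillian L \<longleftrightarrow> clinear_so L \<and>
     (\<forall>t\<ge>0. completely_positive (exp_so t L) \<and> trace_preserving (exp_so t L))"

definition unital_so :: "(complex^'n^'n \<Rightarrow> complex^'n^'n) \<Rightarrow> bool" where
  "unital_so L \<longleftrightarrow> L (mat 1) = 0"

text \<open>Self-adjoint w.r.t. the Hilbert-Schmidt inner product (X,Y) = tr(X^* Y).\<close>
definition reversible_so :: "(complex^'n^'n \<Rightarrow> complex^'n^'n) \<Rightarrow> bool" where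
  "reversible_so L \<longleftrightarrow> (\<forall>X Y. trace (adj (L X) ** Y) = trace (adj X ** L Y))"

definition acu_eigenbasis ::
  "(complex^'n^'n \<Rightarrow> complex^'n^'n) \<Rightarrow> ('g::{finite,ab_group_add} \<Rightarrow> complex^'n^'n)
     \<Rightarrow> ('g \<Rightarrow> complex) \<Rightarrow> bool" where
  "acu_eigenbasis L U lam \<longleftrightarrow>
     CARD('g) = CARD('n)^2 \<and>
     U 0 = mat 1 \<and>
     (\<forall>i. unitary_mat (U i)) \<and>
     (\<forall>i. L (U i) = cscale (lam i) (U i)) \<and>
     (\<forall>i j. trace (adj (U i) ** U j) = (if i = j then of_nat CARD('n) else 0)) \<and>
     (\<forall>i j. \<exists>\<phi> \<phi>'. cmod \<phi> = 1 \<and> cmod \<phi>' = 1 \<and>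
        U i ** U j = cscale \<phi> (U j ** U i) \<and> U i ** U j = cscale \<phi>' (U (i + j)))"

definition qnorm2 :: "complex^'n^'n \<Rightarrow> real" where
  "qnorm2 Y = (Re (trace (adj Y ** Y)) / real CARD('n)) powr (1/2)"

definition qnorm4 :: "complex^'n^'n \<Rightarrow> real" where
  "qnorm4 Y = (Re (trace ((adj Y ** Y) ** (adj Y ** Y))) / real CARD('n)) powr (1/4)"

definition qnorm_2to4 :: "(complex^'n^'n \<Rightarrow> complex^'n^'n) \<Rightarrow> real" where
  "qnorm_2to4 S = Sup {qnorm4 (S X) / qnorm2 X | X. X \<noteq> 0}"

section \<open>Classical side: V(G) = 'g \<Rightarrow> complex\<close>

definition is_character :: "('g::ab_group_add \<Rightarrow> complex) \<Rightarrow> bool" where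
  "is_character \<psi> \<longleftrightarrow> (\<forall>a b. \<psi> (a + b) = \<psi> a * \<psi> b) \<and> (\<forall>a. cmod (\<psi> a) = 1)"

definition char_iso :: "('g::ab_group_add \<Rightarrow> 'g \<Rightarrow> complex) \<Rightarrow> bool" where
  "char_iso ch \<longleftrightarrow> (\<forall>i j. ch (i + j) = (\<lambda>g. ch i g * ch j g)) \<and>
                   bij_betw ch UNIV {\<psi>. is_character \<psi>}"

definition cnorm :: "nat \<Rightarrow> ('g::finite \<Rightarrow> complex) \<Rightarrow> real" where
  "cnorm p f = ((\<Sum>g\<in>UNIV. cmod (f g) ^ p) / real CARD('g)) powr (1 / real p)"

definition cnorm_2to4 :: "(('g::finite \<Rightarrow> complex) \<Rightarrow> ('g \<Rightarrow> complex)) \<Rightarrow> real" where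
  "cnorm_2to4 A = Sup {cnorm 4 (A f) / cnorm 2 f | f. f \<noteq> (\<lambda>_. 0)}"

definition fourier :: "('g::finite \<Rightarrow> 'g \<Rightarrow> complex) \<Rightarrow> ('g \<Rightarrow> complex) \<Rightarrow> 'g \<Rightarrow> complex" where
  "fourier ch f i = (\<Sum>g\<in>UNIV. cnj (ch i g) * f g) / of_nat CARD('g)"

definition classical_sg ::
  "('g::finite \<Rightarrow> 'g \<Rightarrow> complex) \<Rightarrow> ('g \<Rightarrow> complex) \<Rightarrow> real \<Rightarrow> ('g \<Rightarrow> complex) \<Rightarrow> 'g \<Rightarrow> complex" where
  "classical_sg ch lam t f = (\<lambda>g. \<Sum>i\<in>UNIV. exp (lam i * of_real t) * fourier ch f i * ch i g)"

definition delta_fun :: "'g \<Rightarrow> 'g \<Rightarrow> complex" where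
  "delta_fun h = (\<lambda>g. if g = h then 1 else 0)"

text \<open>Tensor product A (x) B acting on V(G1) (x) V(G2) = V(G1 \<times> G2), with (f1 (x) f2)(g1,g2) = f1 g1 * f2 g2.\<close>
definition fun_tensor ::
  "(('a::finite \<Rightarrow> complex) \<Rightarrow> ('a \<Rightarrow> complex)) \<Rightarrow> (('b::finite \<Rightarrow> complex) \<Rightarrow> ('b \<Rightarrow> complex))
     \<Rightarrow> ('a \<times> 'b \<Rightarrow> complex) \<Rightarrow> ('a \<times> 'b \<Rightarrow> complex)" where
  "fun_tensor A B F = (\<lambda>(g1, g2). \<Sum>h1\<in>UNIV. \<Sum>h2\<in>UNIV.
       F (h1, h2) * A (delta_fun h1) g1 * B (delta_fun h2) g2)"

end

theory Submission
  imports Defs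
begin

text \<open>
  On both sides the semigroups are diagonal in bases indexed by the same group \<open>G = G\<^sub>1 \<times> G\<^sub>2\<close>,
  with the same nonnegative multipliers \<open>\<rho>\<close>: the Kronecker products \<open>W\<^sub>p\<close> of the unitary eigenbases
  on the quantum side, the product characters \<open>\<chi>\<^sub>p\<close> on the classical side (reversibility makes the
  eigenvalues real).  Write \<open>X = \<Sum>\<^sub>p c\<^sub>p W\<^sub>p\<close>.  By Parseval \<open>\<parallel>X\<parallel>\<^sub>2\<close> is the \<open>\<ell>\<^sup>2\<close>-norm of \<open>c\<close>.
  Expanding \<open>tr |Y|\<^sup>4\<close> for \<open>Y = \<Sum>\<^sub>p \<rho>\<^sub>p c\<^sub>p W\<^sub>p\<close>, every product \<open>W\<^sub>a\<^sup>* W\<^sub>b W\<^sub>c\<^sup>* W\<^sub>e\<close> is a unimodular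
  multiple of \<open>W\<^sub>-\<^sub>a\<^sub>+\<^sub>b\<^sub>-\<^sub>c\<^sub>+\<^sub>e\<close>, which is traceless unless its index vanishes; so the triangle
  inequality bounds \<open>\<parallel>Y\<parallel>\<^sub>4\<^sup>4\<close> by the additive energy of \<open>\<rho>|c|\<close>.  For the classical function
  \<open>f = \<Sum>\<^sub>p |c\<^sub>p| \<chi>\<^sub>p\<close> orthogonality of characters gives both quantities exactly, so every
  quantum ratio \<open>\<parallel>Y\<parallel>\<^sub>4 / \<parallel>X\<parallel>\<^sub>2\<close> is dominated by a classical one.
\<close>

lemma sum_UNIV_prod:
  "(\<Sum>p\<in>(UNIV :: ('a::finite \<times> 'b::finite) set). f p) = (\<Sum>i\<in>UNIV. \<Sum>j\<in>UNIV. f (i, j))"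
  by (simp add: sum.cartesian_product UNIV_Times_UNIV[symmetric] del: UNIV_Times_UNIV)

lemma sum_swap_nested2:
  "(\<Sum>i\<in>A. \<Sum>a\<in>B. \<Sum>b\<in>C. f i a b) = (\<Sum>a\<in>B. \<Sum>b\<in>C. \<Sum>i\<in>A. f i a b)"
  by (subst sum.swap) (simp add: sum.swap[of _ A])

lemma sum_swap_nested4:
  "(\<Sum>x\<in>X. \<Sum>a\<in>A. \<Sum>b\<in>B. \<Sum>c\<in>C. \<Sum>e\<in>E. f x a b c e) =
   (\<Sum>a\<in>A. \<Sum>b\<in>B. \<Sum>c\<in>C. \<Sum>e\<in>E. \<Sum>x\<in>X. f x a b c e)"
proof -
  have "(\<Sum>x\<in>X. \<Sum>a\<in>A. \<Sum>b\<in>B. \<Sum>c\<in>C. \<Sum>e\<in>E. f x a b c e) =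
      (\<Sum>a\<in>A. \<Sum>b\<in>B. \<Sum>x\<in>X. \<Sum>c\<in>C. \<Sum>e\<in>E. f x a b c e)"
    by (rule sum_swap_nested2)
  moreover have "(\<Sum>x\<in>X. \<Sum>c\<in>C. \<Sum>e\<in>E. f x a b c e) = (\<Sum>c\<in>C. \<Sum>e\<in>E. \<Sum>x\<in>X. f x a b c e)" for a b
    by (rule sum_swap_nested2)
  ultimately show ?thesis by simp
qed

lemma sum_sum_mult_sum_sum:
  "(\<Sum>a\<in>A. \<Sum>b\<in>B. f a b) * (\<Sum>c\<in>C. \<Sum>e\<in>E. g c e) =
   (\<Sum>a\<in>A. \<Sum>b\<in>B. \<Sum>c\<in>C. \<Sum>e\<in>E. f a b * g c e :: 'a::comm_semiring_0)"
  by (simp only: sum_distrib_right) (simp only: sum_distrib_left)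

lemma norm_sum4_le:
  "norm (\<Sum>a\<in>A. \<Sum>b\<in>B. \<Sum>c\<in>C. \<Sum>e\<in>E. f a b c e :: 'a::real_normed_vector) \<le>
   (\<Sum>a\<in>A. \<Sum>b\<in>B. \<Sum>c\<in>C. \<Sum>e\<in>E. norm (f a b c e))"
  by (intro order_trans[OF norm_sum] sum_mono)+ (rule order_refl)

lemma sum_mult_cnj_sum:
  "(\<Sum>a\<in>A. c a * z a) * cnj (\<Sum>a\<in>A. c a * z a) = (\<Sum>a\<in>A. \<Sum>b\<in>A. c a * cnj (c b) * (z a * cnj (z b)))"
  by (simp add: sum_product mult_ac)

lemma mult_cnj_eq_cmod_sq: "z * cnj z = (complex_of_real (cmod z))^2"
  by (metis complex_norm_square of_real_power)

lemma complex_of_real_cmod_pow4: "complex_of_real ((cmod z)^4) = (z * cnj z) * (z * cnj z)"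
  by (simp add: mult_cnj_eq_cmod_sq flip: power_add)

lemma unimodular_idem_eq_1: "cmod z = 1 \<Longrightarrow> z * z = z \<Longrightarrow> z = (1 :: complex)"
  by (metis mult_cancel_right1 norm_zero zero_neq_one)

lemma pow_powr_inverse: "(B :: real) \<ge> 0 \<Longrightarrow> p > 0 \<Longrightarrow> (B ^ p) powr (1 / real p) = B"
  by (cases "B = 0") (simp_all add: powr_realpow[symmetric] powr_powr)

lemma cscale_nth [simp]: "cscale c A $ i $ j = c * A $ i $ j"
  by (simp add: cscale_def)

lemma adj_nth [simp]: "adj A $ i $ j = cnj (A $ j $ i)"
  by (simp add: adj_def)

lemma matrix_mult_nth: "(A ** B) $ i $ j = (\<Sum>k\<in>UNIV. A $ i $ k * B $ k $ j)"
  by (simp add: matrix_matrix_mult_def)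

lemma kron_nth [simp]: "kron A B $ p $ q = A $ fst p $ fst q * B $ snd p $ snd q"
  by (simp add: kron_def)

lemma cscale_cscale [simp]: "cscale a (cscale b A) = cscale (a * b) A"
  by (simp add: vec_eq_iff)

lemma cscale_one [simp]: "cscale 1 A = A"
  by (simp add: vec_eq_iff)

lemma cscale_zero [simp]: "cscale 0 A = 0" "cscale c 0 = 0"
  by (simp_all add: vec_eq_iff)

lemma cscale_sum: "cscale c (sum f S) = (\<Sum>a\<in>S. cscale c (f a))"
  by (simp add: vec_eq_iff sum_distrib_left)

lemma scaleR_matrix_nth: "(r *\<^sub>R (A :: complex^'n^'m)) $ i $ j = complex_of_real r * A $ i $ j"
  by (simp only: vector_scaleR_component) (simp add: scaleR_conv_of_real)

lemma scaleR_cscale: "r *\<^sub>R cscale c A = cscale (complex_of_real r * c) A"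
  by (simp add: vec_eq_iff scaleR_matrix_nth del: vector_scaleR_component)

lemma cscale_matrix_mult_left [simp]: "cscale c A ** B = cscale c (A ** B)"
  by (simp add: vec_eq_iff matrix_mult_nth sum_distrib_left mult.assoc)

lemma cscale_matrix_mult_right [simp]: "A ** cscale c B = cscale c (A ** B)"
  by (simp add: vec_eq_iff matrix_mult_nth sum_distrib_left mult_ac)

lemma matrix_mult_sum_left: "sum f S ** B = (\<Sum>a\<in>S. f a ** B)"
  by (simp add: vec_eq_iff matrix_mult_nth sum_distrib_right sum.swap[of _ S])

lemma matrix_mult_sum_right: "B ** sum f S = (\<Sum>a\<in>S. B ** f a)"
  by (simp add: vec_eq_iff matrix_mult_nth sum_distrib_left sum.swap[of _ S])

lemma adj_cscale [simp]: "adj (cscale c A) = cscale (cnj c) (adj A)"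
  by (simp add: vec_eq_iff)

lemma adj_matrix_mult: "adj (A ** B) = adj B ** adj A"
  by (simp add: vec_eq_iff matrix_mult_nth mult.commute)

lemma adj_adj [simp]: "adj (adj A) = A"
  by (simp add: vec_eq_iff)

lemma adj_mat_1 [simp]: "adj (mat 1 :: complex^'m^'m) = mat 1"
  by (simp add: vec_eq_iff mat_def)

lemma adj_sum: "adj (sum f S) = (\<Sum>a\<in>S. adj (f a))"
  by (simp add: vec_eq_iff)

lemma trace_cscale [simp]: "trace (cscale c A) = c * trace A"
  by (simp add: trace_def sum_distrib_left)

lemma trace_sum: "trace (sum f S) = (\<Sum>a\<in>S. trace (f a))"
  unfolding trace_def by (simp add: sum.swap[of _ S])

lemma trace_adj: "trace (adj A) = cnj (trace (A :: complex^'m^'m))"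
  by (simp add: trace_def)

lemma trace_adj_matrix_mult_swap: "trace (adj X ** Y) = cnj (trace (adj Y ** (X :: complex^'m^'m)))"
  by (metis adj_adj adj_matrix_mult trace_adj)

lemma kron_matrix_mult: "kron A B ** kron C D = kron (A ** C) (B ** D)"
  by (simp add: vec_eq_iff matrix_mult_nth sum_UNIV_prod sum_product mult_ac)

lemma adj_kron: "adj (kron A B) = kron (adj A) (adj B)"
  by (simp add: vec_eq_iff)

lemma trace_kron: "trace (kron A B) = trace A * trace B"
  by (simp add: trace_def sum_UNIV_prod sum_product)

lemma kron_cscale_left: "kron (cscale c A) B = cscale c (kron A B)"
  by (simp add: vec_eq_iff mult_ac)

lemma kron_cscale_right: "kron A (cscale c B) = cscale c (kron A B)"
  by (simp add: vec_eq_iff mult_ac)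

lemma kron_sum_left: "kron (sum f S) B = (\<Sum>a\<in>S. kron (f a) B)"
  by (simp add: vec_eq_iff sum_distrib_right)

lemma kron_sum_right: "kron A (sum f S) = (\<Sum>a\<in>S. kron A (f a))"
  by (simp add: vec_eq_iff sum_distrib_left)

lemma kron_mat_1: "kron (mat 1) (mat 1) = mat 1"
  by (simp add: vec_eq_iff mat_def prod_eq_iff)

lemma matrix_unit_expansion: "A = (\<Sum>i\<in>UNIV. \<Sum>j\<in>UNIV. cscale (A $ i $ j) (mat_unit i j))"
proof -
  have "(\<Sum>j\<in>UNIV. A $ i $ j * (if p = i \<and> q = j then 1 else 0)) = (if p = i then A $ i $ q else 0)" for p q i
    by (cases "p = i") (simp_all add: if_distrib[of "\<lambda>z. _ * z"] cong: if_cong)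
  then show ?thesis by (simp add: vec_eq_iff mat_unit_def)
qed

lemma cscale_add_left: "cscale (a + b) A = cscale a A + cscale b A"
  by (simp add: vec_eq_iff distrib_right)

lemma mat_1_nonzero: "(mat 1 :: complex^'m^'m) \<noteq> 0"
proof
  fix i :: 'm
  assume "(mat 1 :: complex^'m^'m) = 0"
  then have "(mat 1 :: complex^'m^'m) $ i $ i = 0" by simp
  then show False by (simp add: mat_def)
qed

lemma inner_matrix_eq_Re_trace: "(X :: complex^'m^'m) \<bullet> Y = Re (trace (adj Y ** X))"
proof -
  have "X \<bullet> Y = (\<Sum>i\<in>UNIV. \<Sum>j\<in>UNIV. Re (cnj (Y $ i $ j) * X $ i $ j))"
    unfolding inner_vec_def by (simp add: inner_complex_def mult.commute)
  also have "\<dots> = Re (trace (adj Y ** X))"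
    unfolding trace_def matrix_mult_nth adj_nth Re_sum[symmetric] by (subst sum.swap) simp
  finally show ?thesis .
qed

lemma Re_trace_quartic_nonneg: "Re (trace ((adj Y ** Y) ** (adj Y ** Y))) \<ge> 0"
  for Y :: "complex^'m^'m"
proof -
  have "adj (adj Y ** Y) = adj Y ** Y" by (simp add: adj_matrix_mult)
  then have "Re (trace ((adj Y ** Y) ** (adj Y ** Y))) = (adj Y ** Y) \<bullet> (adj Y ** Y)"
    by (simp add: inner_matrix_eq_Re_trace)
  then show ?thesis by simp
qed

definition hs_coeff :: "complex^'m^'m \<Rightarrow> complex^'m^'m \<Rightarrow> complex" where
  "hs_coeff U X = trace (adj U ** X) / of_nat CARD('m)"

lemma pairwise_orthogonal_expansion:
  fixes S :: "'a::euclidean_space set"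
  assumes orth: "pairwise orthogonal S" and nonzero: "0 \<notin> S" and card: "card S = DIM('a)"
  shows "x = (\<Sum>b\<in>S. (b \<bullet> x / (b \<bullet> b)) *\<^sub>R b)"
proof -
  have "independent S" using pairwise_orthogonal_independent[OF orth nonzero] .
  then have "UNIV \<subseteq> span S"
    by (rule card_ge_dim_independent[OF subset_UNIV]) (simp add: card)
  then have "x - (\<Sum>b\<in>S. (b \<bullet> x / (b \<bullet> b)) *\<^sub>R b) \<in> span S" by blast
  from Gram_Schmidt_step[OF orth this, of x] show ?thesis
    by (simp add: orthogonal_def)
qed

lemma trace_orthogonal_expansion:
  fixes V :: "'g::finite \<Rightarrow> complex^'m^'m"
  assumes orth: "\<And>a b. trace (adj (V a) ** V b) = (if a = b then of_nat CARD('m) else 0)"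
    and card: "CARD('g) = CARD('m)^2"
  shows "X = (\<Sum>a\<in>UNIV. cscale (hs_coeff (V a) X) (V a))"
proof -
  define D where "D = real CARD('m)"
  have "D > 0" by (simp add: D_def)
  \<comment> \<open>Over the reals, the \<open>V a\<close> together with the \<open>\<i> V a\<close> form an orthogonal basis of \<open>complex^'m^'m\<close>.\<close>
  define f :: "'g \<times> bool \<Rightarrow> complex^'m^'m" where
    "f p = (if snd p then V (fst p) else cscale \<i> (V (fst p)))" for p
  have f_inner: "f p \<bullet> f q = (if p = q then D else 0)" for p q
    by (cases p; cases q) (auto simp: f_def inner_matrix_eq_Re_trace orth D_def)
  have "inj f"
  proof (rule injI)
    fix p q assume "f p = f q"
    then show "p = q" using f_inner[of p p] f_inner[of p q] \<open>D > 0\<close> by (auto split: if_splits)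
  qed
  have "pairwise orthogonal (range f)"
    unfolding pairwise_def orthogonal_def using f_inner by auto
  moreover have "0 \<notin> range f"
    using f_inner \<open>D > 0\<close> by (metis imageE inner_zero_left less_irrefl)
  moreover have "card (range f) = DIM(complex^'m^'m)"
    using card_image[OF \<open>inj f\<close>] by (simp add: card card_UNIV_bool power2_eq_square)
  ultimately have "X = (\<Sum>b\<in>range f. (b \<bullet> X / (b \<bullet> b)) *\<^sub>R b)"
    by (rule pairwise_orthogonal_expansion)
  also have "\<dots> = (\<Sum>a\<in>UNIV. (f (a, True) \<bullet> X / D) *\<^sub>R f (a, True) + (f (a, False) \<bullet> X / D) *\<^sub>R f (a, False))"
    by (simp add: sum.reindex[OF \<open>inj f\<close>] f_inner sum_UNIV_prod UNIV_bool add.commute)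
  also have "\<dots> = (\<Sum>a\<in>UNIV. cscale (hs_coeff (V a) X) (V a))"
  proof (rule sum.cong[OF refl])
    fix a
    let ?t = "trace (adj (V a) ** X)"
    have "f (a, True) \<bullet> X = Re ?t" "f (a, False) \<bullet> X = Im ?t"
      by (simp_all add: f_def inner_matrix_eq_Re_trace trace_adj_matrix_mult_swap[of X])
    moreover have "complex_of_real (Re ?t / D) * z + complex_of_real (Im ?t / D) * (\<i> * z) = ?t / D * z" for z
      using \<open>D > 0\<close> by (simp add: field_simps complex_eq_iff)
    ultimately show "(f (a, True) \<bullet> X / D) *\<^sub>R f (a, True) + (f (a, False) \<bullet> X / D) *\<^sub>R f (a, False)
        = cscale (hs_coeff (V a) X) (V a)"
      by (simp add: f_def vec_eq_iff scaleR_matrix_nth hs_coeff_def D_def del: vector_scaleR_component)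
  qed
  finally show ?thesis .
qed

section \<open>Nice error bases\<close>

text \<open>What remains of an almost commuting unitary eigenbasis once \<open>\<L>\<close> is forgotten.\<close>

definition nice_error_basis :: "('g::{finite,ab_group_add} \<Rightarrow> complex^'m^'m) \<Rightarrow> bool" where
  "nice_error_basis W \<longleftrightarrow> CARD('g) = CARD('m)^2 \<and> W 0 = mat 1 \<and> (\<forall>a. unitary_mat (W a)) \<and>
     (\<forall>a b. trace (adj (W a) ** W b) = (if a = b then of_nat CARD('m) else 0)) \<and>
     (\<forall>a b. \<exists>\<phi>. cmod \<phi> = 1 \<and> W a ** W b = cscale \<phi> (W (a + b)))"

definition kron_basis ::
  "('a \<Rightarrow> complex^'n^'n) \<Rightarrow> ('b \<Rightarrow> complex^'m^'m) \<Rightarrow> 'a \<times> 'b \<Rightarrow> complex^('n \<times> 'm)^('n \<times> 'm)" where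
  "kron_basis U V p = kron (U (fst p)) (V (snd p))"

lemma acu_eigenbasis_nice_error_basis: "acu_eigenbasis L U lam \<Longrightarrow> nice_error_basis U"
  unfolding acu_eigenbasis_def nice_error_basis_def by metis

lemma nice_error_basis_expansion:
  "nice_error_basis W \<Longrightarrow> X = (\<Sum>a\<in>UNIV. cscale (hs_coeff (W a) X) (W a))"
  unfolding nice_error_basis_def by (intro trace_orthogonal_expansion) auto

lemma nice_error_basis_kron:
  fixes U :: "'a::{finite,ab_group_add} \<Rightarrow> complex^'n^'n" and V :: "'b::{finite,ab_group_add} \<Rightarrow> complex^'m^'m"
  assumes "nice_error_basis U" "nice_error_basis V"
  shows "nice_error_basis (kron_basis U V)"
proof -
  have U: "CARD('a) = CARD('n)^2" "U 0 = mat 1" "\<And>a. unitary_mat (U a)"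
     "\<And>a b. trace (adj (U a) ** U b) = (if a = b then of_nat CARD('n) else 0)"
     "\<And>a b. \<exists>\<phi>. cmod \<phi> = 1 \<and> U a ** U b = cscale \<phi> (U (a + b))"
    using assms(1) unfolding nice_error_basis_def by auto
  have V: "CARD('b) = CARD('m)^2" "V 0 = mat 1" "\<And>a. unitary_mat (V a)"
     "\<And>a b. trace (adj (V a) ** V b) = (if a = b then of_nat CARD('m) else 0)"
     "\<And>a b. \<exists>\<phi>. cmod \<phi> = 1 \<and> V a ** V b = cscale \<phi> (V (a + b))"
    using assms(2) unfolding nice_error_basis_def by auto
  have "\<exists>\<phi>. cmod \<phi> = 1 \<and> kron_basis U V p ** kron_basis U V q = cscale \<phi> (kron_basis U V (p + q))" for p q
  proof -
    obtain \<phi> where "cmod \<phi> = 1" "U (fst p) ** U (fst q) = cscale \<phi> (U (fst p + fst q))"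
      using U(5) by blast
    moreover obtain \<psi> where "cmod \<psi> = 1" "V (snd p) ** V (snd q) = cscale \<psi> (V (snd p + snd q))"
      using V(5) by blast
    ultimately show ?thesis
      by (intro exI[of _ "\<phi> * \<psi>"])
        (simp add: kron_basis_def kron_matrix_mult kron_cscale_left kron_cscale_right norm_mult mult.commute)
  qed
  moreover have "unitary_mat (kron_basis U V p)" for p
    using U(3)[of "fst p"] V(3)[of "snd p"]
    by (simp add: kron_basis_def unitary_mat_def adj_kron kron_matrix_mult kron_mat_1)
  moreover have "trace (adj (kron_basis U V p) ** kron_basis U V q) =
      (if p = q then of_nat CARD('n \<times> 'm) else 0)" for p q
    by (simp add: kron_basis_def adj_kron kron_matrix_mult trace_kron U(4) V(4) prod_eq_iff)
  ultimately show ?thesis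
    by (simp add: nice_error_basis_def kron_basis_def U(1,2) V(1,2) power_mult_distrib kron_mat_1)
qed

lemma nice_error_basis_adj:
  assumes "nice_error_basis W"
  obtains \<alpha> where "cmod \<alpha> = 1" "adj (W a) = cscale \<alpha> (W (- a))"
proof -
  from assms obtain \<phi> where \<phi>: "cmod \<phi> = 1" "W a ** W (- a) = cscale \<phi> (W 0)"
    unfolding nice_error_basis_def by (metis add.right_inverse)
  from assms have "adj (W a) ** W a = mat 1" "W 0 = mat 1"
    unfolding nice_error_basis_def unitary_mat_def by auto
  then have "W (- a) = cscale \<phi> (adj (W a))"
    using \<phi>(2) by (metis cscale_matrix_mult_right matrix_mul_assoc matrix_mul_lid matrix_mul_rid)
  then have "cscale (cnj \<phi>) (W (- a)) = cscale (cnj \<phi> * \<phi>) (adj (W a))" by simp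
  moreover have "cnj \<phi> * \<phi> = 1"
    using \<phi>(1) by (metis complex_norm_square mult.commute norm_one of_real_1 power_one)
  ultimately have "adj (W a) = cscale (cnj \<phi>) (W (- a))" by simp
  then show ?thesis using that \<phi>(1) by (metis complex_mod_cnj)
qed

lemma nice_error_basis_mult:
  assumes "nice_error_basis W"
  obtains \<phi> where "cmod \<phi> = 1" "W a ** W b = cscale \<phi> (W (a + b))"
  using assms unfolding nice_error_basis_def by blast

lemma nice_error_basis_trace:
  assumes "nice_error_basis (W :: 'g::{finite,ab_group_add} \<Rightarrow> complex^'m^'m)"
  shows "trace (W a) = (if a = 0 then of_nat CARD('m) else 0)"
  using assms unfolding nice_error_basis_def by (metis adj_mat_1 matrix_mul_lid)

lemma nice_error_basis_trace_quadruple: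
  assumes W: "nice_error_basis (W :: 'g::{finite,ab_group_add} \<Rightarrow> complex^'m^'m)"
  shows "cmod (trace ((adj (W a) ** W b) ** (adj (W c) ** W e))) =
     (if a - b + c - e = 0 then real CARD('m) else 0)"
proof -
  obtain \<alpha> \<gamma> where \<alpha>: "cmod \<alpha> = 1" "adj (W a) = cscale \<alpha> (W (- a))"
    and \<gamma>: "cmod \<gamma> = 1" "adj (W c) = cscale \<gamma> (W (- c))"
    using nice_error_basis_adj[OF W] by metis
  obtain \<phi>\<^sub>1 \<phi>\<^sub>2 \<phi>\<^sub>3 where
    \<phi>\<^sub>1: "cmod \<phi>\<^sub>1 = 1" "W (- a) ** W b = cscale \<phi>\<^sub>1 (W (- a + b))" and
    \<phi>\<^sub>2: "cmod \<phi>\<^sub>2 = 1" "W (- c) ** W e = cscale \<phi>\<^sub>2 (W (- c + e))" and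
    \<phi>\<^sub>3: "cmod \<phi>\<^sub>3 = 1" "W (- a + b) ** W (- c + e) = cscale \<phi>\<^sub>3 (W (- a + b + (- c + e)))"
    using nice_error_basis_mult[OF W] by metis
  have "(adj (W a) ** W b) ** (adj (W c) ** W e) =
      cscale (\<alpha> * \<phi>\<^sub>1 * (\<gamma> * \<phi>\<^sub>2) * \<phi>\<^sub>3) (W (- (a - b + c - e)))"
    by (simp only: \<alpha> \<gamma> \<phi>\<^sub>1 \<phi>\<^sub>2 \<phi>\<^sub>3 cscale_matrix_mult_left cscale_matrix_mult_right cscale_cscale mult_ac)
      (simp add: algebra_simps)
  then show ?thesis
    by (simp add: nice_error_basis_trace[OF W] norm_mult \<alpha>(1) \<gamma>(1) \<phi>\<^sub>1(1) \<phi>\<^sub>2(1) \<phi>\<^sub>3(1))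
qed

section \<open>Norms of expansions in a nice error basis\<close>

text \<open>For real \<open>r\<close> this is \<open>\<Sum>\<^sub>x |\<Sum>\<^sub>a r\<^sub>a \<chi>\<^sub>a(x)|\<^sup>4 / |G|\<close>, see \<open>char_expansion_sum_pow4\<close>.\<close>

definition additive_energy :: "('g::{finite,ab_group_add} \<Rightarrow> real) \<Rightarrow> real" where
  "additive_energy r = (\<Sum>a\<in>UNIV. \<Sum>b\<in>UNIV. \<Sum>c\<in>UNIV. \<Sum>e\<in>UNIV.
      r a * r b * r c * r e * (if a - b + c - e = 0 then 1 else 0))"

lemma nice_error_basis_parseval:
  assumes W: "nice_error_basis (W :: 'g::{finite,ab_group_add} \<Rightarrow> complex^'m^'m)"
  shows "Re (trace (adj X ** X)) = real CARD('m) * (\<Sum>a\<in>UNIV. (cmod (hs_coeff (W a) X))^2)"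
proof -
  let ?c = "\<lambda>a. hs_coeff (W a) X"
  have "trace (adj X ** X) = (\<Sum>a\<in>UNIV. ?c a * trace (adj X ** W a))"
    by (subst (2) nice_error_basis_expansion[OF W]) (simp add: matrix_mult_sum_right trace_sum)
  also have "\<dots> = (\<Sum>a\<in>UNIV. real CARD('m) * (?c a * cnj (?c a)))"
    by (simp add: trace_adj_matrix_mult_swap[of X] hs_coeff_def mult_ac)
  also have "\<dots> = of_real (real CARD('m) * (\<Sum>a\<in>UNIV. (cmod (?c a))^2))"
    by (simp add: mult_cnj_eq_cmod_sq sum_distrib_left)
  finally show ?thesis by simp
qed

lemma nice_error_basis_trace_quartic_le:
  fixes W :: "'g::{finite,ab_group_add} \<Rightarrow> complex^'m^'m" and y :: "'g \<Rightarrow> complex"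
  assumes W: "nice_error_basis W"
  defines "Y \<equiv> \<Sum>a\<in>UNIV. cscale (y a) (W a)"
  shows "Re (trace ((adj Y ** Y) ** (adj Y ** Y))) \<le> real CARD('m) * additive_energy (\<lambda>a. cmod (y a))"
proof -
  have "adj Y ** Y = (\<Sum>b\<in>UNIV. \<Sum>a\<in>UNIV. cscale (cnj (y a) * y b) (adj (W a) ** W b))"
    unfolding Y_def by (simp add: adj_sum matrix_mult_sum_left matrix_mult_sum_right cscale_sum mult_ac)
  also have "\<dots> = (\<Sum>a\<in>UNIV. \<Sum>b\<in>UNIV. cscale (cnj (y a) * y b) (adj (W a) ** W b))"
    by (rule sum.swap)
  finally have expand: "trace ((adj Y ** Y) ** (adj Y ** Y)) = (\<Sum>a\<in>UNIV. \<Sum>b\<in>UNIV. \<Sum>c\<in>UNIV. \<Sum>e\<in>UNIV.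
      (cnj (y a) * y b * (cnj (y c) * y e)) * trace ((adj (W c) ** W e) ** (adj (W a) ** W b)))"
    by (simp only: matrix_mult_sum_left matrix_mult_sum_right cscale_matrix_mult_left
        cscale_matrix_mult_right cscale_sum cscale_cscale trace_sum trace_cscale)
  have "Re (trace ((adj Y ** Y) ** (adj Y ** Y))) \<le> cmod (trace ((adj Y ** Y) ** (adj Y ** Y)))"
    by (rule complex_Re_le_cmod)
  also have "\<dots> \<le> (\<Sum>a\<in>UNIV. \<Sum>b\<in>UNIV. \<Sum>c\<in>UNIV. \<Sum>e\<in>UNIV.
      norm ((cnj (y a) * y b * (cnj (y c) * y e)) * trace ((adj (W c) ** W e) ** (adj (W a) ** W b))))"
    unfolding expand by (rule norm_sum4_le)
  also have "\<dots> = (\<Sum>a\<in>UNIV. \<Sum>b\<in>UNIV. \<Sum>c\<in>UNIV. \<Sum>e\<in>UNIV. real CARD('m) *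
      (cmod (y a) * cmod (y b) * cmod (y c) * cmod (y e) * (if a - b + c - e = 0 then 1 else 0)))"
  proof (intro sum.cong refl)
    fix a b c e :: 'g
    have "c - e + a - b = a - b + c - e" by (simp add: algebra_simps)
    then have "cmod (trace ((adj (W c) ** W e) ** (adj (W a) ** W b))) =
        (if a - b + c - e = 0 then real CARD('m) else 0)"
      by (simp only: nice_error_basis_trace_quadruple[OF W])
    then show "norm ((cnj (y a) * y b * (cnj (y c) * y e)) * trace ((adj (W c) ** W e) ** (adj (W a) ** W b))) =
      real CARD('m) * (cmod (y a) * cmod (y b) * cmod (y c) * cmod (y e) * (if a - b + c - e = 0 then 1 else 0))"
      by (simp add: norm_mult)
  qed
  also have "\<dots> = real CARD('m) * additive_energy (\<lambda>a. cmod (y a))"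
    by (simp add: additive_energy_def sum_distrib_left)
  finally show ?thesis .
qed

lemma qnorm2_nice_error_basis:
  "nice_error_basis W \<Longrightarrow> qnorm2 X = (\<Sum>a\<in>UNIV. (cmod (hs_coeff (W a) X))^2) powr (1/2)"
  by (simp add: qnorm2_def nice_error_basis_parseval)

lemma qnorm4_diagonal_le:
  fixes W :: "'g::{finite,ab_group_add} \<Rightarrow> complex^'m^'m"
  assumes W: "nice_error_basis W" and \<rho>: "\<And>a. \<rho> a \<ge> 0"
  shows "qnorm4 (\<Sum>a\<in>UNIV. cscale (of_real (\<rho> a) * c a) (W a))
           \<le> additive_energy (\<lambda>a. \<rho> a * cmod (c a)) powr (1/4)"
proof -
  let ?Y = "\<Sum>a\<in>UNIV. cscale (of_real (\<rho> a) * c a) (W a)"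
  have "(\<lambda>a. cmod (of_real (\<rho> a) * c a)) = (\<lambda>a. \<rho> a * cmod (c a))"
    using \<rho> by (simp add: norm_mult)
  then have "Re (trace ((adj ?Y ** ?Y) ** (adj ?Y ** ?Y))) / real CARD('m)
      \<le> additive_energy (\<lambda>a. \<rho> a * cmod (c a))"
    using nice_error_basis_trace_quartic_le[OF W, of "\<lambda>a. of_real (\<rho> a) * c a"]
    by (simp add: divide_le_eq mult.commute)
  then show ?thesis
    unfolding qnorm4_def by (intro powr_mono2) (auto intro: divide_nonneg_pos Re_trace_quartic_nonneg)
qed

section \<open>Diagonal superoperators\<close>

definition diagonal_in ::
  "('g::finite \<Rightarrow> complex^'m^'m) \<Rightarrow> ('g \<Rightarrow> complex) \<Rightarrow> (complex^'m^'m \<Rightarrow> complex^'m^'m) \<Rightarrow> bool" where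
  "diagonal_in U m S \<longleftrightarrow> (\<forall>X. S X = (\<Sum>a\<in>UNIV. cscale (m a * hs_coeff (U a) X) (U a)))"

lemma hs_coeff_add: "hs_coeff U (X + Y) = hs_coeff U X + hs_coeff U Y"
  by (simp add: hs_coeff_def matrix_add_ldistrib trace_add add_divide_distrib)

lemma hs_coeff_cscale: "hs_coeff U (cscale c X) = c * hs_coeff U X"
  by (simp add: hs_coeff_def)

lemma hs_coeff_nice_error_basis:
  "nice_error_basis W \<Longrightarrow> hs_coeff (W a) (W b) = (if a = b then 1 else 0)"
  by (simp add: nice_error_basis_def hs_coeff_def)

lemma clinear_so_zero: "clinear_so L \<Longrightarrow> L 0 = 0"
  unfolding clinear_so_def by (metis cscale_zero(1))

lemma clinear_so_sum: "clinear_so L \<Longrightarrow> L (sum f S) = (\<Sum>a\<in>S. L (f a))"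
  by (induction S rule: infinite_finite_induct) (auto simp: clinear_so_zero, auto simp: clinear_so_def)

lemma clinear_so_cscale: "clinear_so L \<Longrightarrow> L (cscale c X) = cscale c (L X)"
  unfolding clinear_so_def by blast

lemma diagonal_in_clinear_so: "diagonal_in U m S \<Longrightarrow> clinear_so S"
  unfolding diagonal_in_def clinear_so_def
  by (simp add: hs_coeff_add hs_coeff_cscale distrib_left cscale_add_left sum.distrib cscale_sum mult_ac)

lemma diagonal_in_eigenvector:
  assumes "nice_error_basis U" "diagonal_in U m S"
  shows "S (U a) = cscale (m a) (U a)"
proof -
  have "cscale (m b * hs_coeff (U b) (U a)) (U b) = (if b = a then cscale (m a) (U a) else 0)" for b
    using assms(1) by (simp add: hs_coeff_nice_error_basis)
  then show ?thesis using assms(2) by (simp add: diagonal_in_def)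
qed

lemma clinear_so_super_tensor: "clinear_so (super_tensor S1 S2)"
  unfolding clinear_so_def super_tensor_def
  by (simp add: cscale_add_left sum.distrib cscale_sum)

lemma super_tensor_kron:
  assumes "clinear_so S1" "clinear_so S2"
  shows "super_tensor S1 S2 (kron A B) = kron (S1 A) (S2 B)"
proof -
  have "kron (S1 A) (S2 B) =
      kron (\<Sum>i\<in>UNIV. \<Sum>j\<in>UNIV. cscale (A $ i $ j) (S1 (mat_unit i j)))
           (\<Sum>k\<in>UNIV. \<Sum>l\<in>UNIV. cscale (B $ k $ l) (S2 (mat_unit k l)))"
    by (subst (1) matrix_unit_expansion, subst (2) matrix_unit_expansion)
      (simp only: assms clinear_so_sum clinear_so_cscale)
  also have "\<dots> = super_tensor S1 S2 (kron A B)"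
    unfolding kron_sum_left
    by (simp add: super_tensor_def kron_sum_right kron_cscale_left kron_cscale_right mult.commute)
  finally show ?thesis by (rule sym)
qed

lemma super_tensor_diagonal_in:
  assumes U1: "nice_error_basis U1" and U2: "nice_error_basis U2"
    and S1: "diagonal_in U1 m1 S1" and S2: "diagonal_in U2 m2 S2"
  shows "diagonal_in (kron_basis U1 U2) (\<lambda>p. m1 (fst p) * m2 (snd p)) (super_tensor S1 S2)"
  unfolding diagonal_in_def
proof
  fix X
  let ?W = "kron_basis U1 U2"
  have lin: "clinear_so S1" "clinear_so S2"
    using S1 S2 by (auto intro: diagonal_in_clinear_so)
  have "super_tensor S1 S2 X = super_tensor S1 S2 (\<Sum>p\<in>UNIV. cscale (hs_coeff (?W p) X) (?W p))"
    using nice_error_basis_expansion[OF nice_error_basis_kron[OF U1 U2]] by metis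
  also have "\<dots> = (\<Sum>p\<in>UNIV. cscale (hs_coeff (?W p) X) (kron (S1 (U1 (fst p))) (S2 (U2 (snd p)))))"
    by (simp add: clinear_so_sum clinear_so_cscale clinear_so_super_tensor kron_basis_def
        super_tensor_kron lin)
  also have "\<dots> = (\<Sum>p\<in>UNIV. cscale (m1 (fst p) * m2 (snd p) * hs_coeff (?W p) X) (?W p))"
    by (simp add: diagonal_in_eigenvector[OF U1 S1] diagonal_in_eigenvector[OF U2 S2]
        kron_cscale_left kron_cscale_right kron_basis_def mult_ac)
  finally show "super_tensor S1 S2 X =
      (\<Sum>p\<in>UNIV. cscale (m1 (fst p) * m2 (snd p) * hs_coeff (?W p) X) (?W p))" .
qed

lemma funpow_eigen_expansion:
  assumes L: "clinear_so L" and eigen: "\<And>a. L (U a) = cscale (lam a) (U a)"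
  shows "(L ^^ n) (\<Sum>a\<in>A. cscale (c a) (U a)) = (\<Sum>a\<in>A. cscale (lam a ^ n * c a) (U a))"
proof (induction n)
  case (Suc n)
  then show ?case by (simp add: clinear_so_sum[OF L] clinear_so_cscale[OF L] eigen mult_ac)
qed simp

lemma bounded_linear_cscale: "bounded_linear (\<lambda>z. cscale (z * c) A)"
  by (intro linear_conv_bounded_linear[THEN iffD1] linearI)
    (simp_all add: vec_eq_iff scaleR_matrix_nth algebra_simps scaleR_conv_of_real[where 'a=complex]
      del: vector_scaleR_component)

lemma exp_so_eigen_expansion:
  fixes U :: "'g::finite \<Rightarrow> complex^'m^'m"
  assumes L: "clinear_so L" and eigen: "\<And>a. L (U a) = cscale (lam a) (U a)"
  shows "exp_so t L (\<Sum>a\<in>UNIV. cscale (c a) (U a)) = (\<Sum>a\<in>UNIV. cscale (exp (lam a * of_real t) * c a) (U a))"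
proof -
  have "(t ^ n / fact n) *\<^sub>R cscale (lam a ^ n * c a) (U a) = cscale ((lam a * of_real t) ^ n /\<^sub>R fact n * c a) (U a)"
    for n a
    by (simp add: scaleR_cscale power_mult_distrib scaleR_conv_of_real[where 'a=complex] divide_inverse mult_ac)
  moreover have "(\<lambda>n. cscale ((lam a * of_real t) ^ n /\<^sub>R fact n * c a) (U a)) sums
      cscale (exp (lam a * of_real t) * c a) (U a)" for a
    by (rule bounded_linear.sums[OF bounded_linear_cscale exp_converges])
  ultimately have "(\<lambda>n. \<Sum>a\<in>UNIV. (t ^ n / fact n) *\<^sub>R cscale (lam a ^ n * c a) (U a)) sums
      (\<Sum>a\<in>UNIV. cscale (exp (lam a * of_real t) * c a) (U a))"
    by (simp add: sums_sum)
  then show ?thesis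
    unfolding exp_so_def funpow_eigen_expansion[OF L eigen] by (simp add: scaleR_sum_right sums_iff)
qed

lemma exp_so_diagonal_in:
  assumes L: "clinear_so L" and U: "acu_eigenbasis L U lam"
  shows "diagonal_in U (\<lambda>a. exp (lam a * of_real t)) (exp_so t L)"
  unfolding diagonal_in_def
proof
  fix X
  have eigen: "L (U a) = cscale (lam a) (U a)" for a
    using U unfolding acu_eigenbasis_def by blast
  have "exp_so t L X = exp_so t L (\<Sum>a\<in>UNIV. cscale (hs_coeff (U a) X) (U a))"
    using nice_error_basis_expansion[OF acu_eigenbasis_nice_error_basis[OF U]] by metis
  then show "exp_so t L X = (\<Sum>a\<in>UNIV. cscale (exp (lam a * of_real t) * hs_coeff (U a) X) (U a))"
    by (simp only: exp_so_eigen_expansion[OF L eigen])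
qed

lemma reversible_so_exp_eigenvalue_real:
  fixes U :: "'g::{finite,ab_group_add} \<Rightarrow> complex^'m^'m"
  assumes rev: "reversible_so L" and U: "acu_eigenbasis L U lam"
  shows "exp (lam a * of_real t) = of_real (exp (Re (lam a) * t))"
proof -
  have eigen: "L (U a) = cscale (lam a) (U a)"
    using U unfolding acu_eigenbasis_def by blast
  have norm: "trace (adj (U a) ** U a) = of_nat CARD('m)"
    using U unfolding acu_eigenbasis_def by simp
  have "trace (adj (L (U a)) ** U a) = trace (adj (U a) ** L (U a))"
    using rev unfolding reversible_so_def by blast
  then have "cnj (lam a) = lam a" by (simp add: eigen norm)
  then have "lam a = of_real (Re (lam a))" by (simp add: complex_eq_iff)
  then show ?thesis by (metis exp_of_real of_real_mult)
qed

section \<open>Character systems\<close>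

definition char_system :: "('g::{finite,ab_group_add} \<Rightarrow> 'g \<Rightarrow> complex) \<Rightarrow> bool" where
  "char_system ch \<longleftrightarrow> (\<forall>a b x. ch (a + b) x = ch a x * ch b x) \<and> (\<forall>a x. cmod (ch a x) = 1) \<and>
     (\<forall>a. (\<Sum>x\<in>UNIV. ch a x) = (if a = 0 then of_nat CARD('g) else 0))"

definition char_prod :: "('a \<Rightarrow> 'a \<Rightarrow> complex) \<Rightarrow> ('b \<Rightarrow> 'b \<Rightarrow> complex) \<Rightarrow> 'a \<times> 'b \<Rightarrow> 'a \<times> 'b \<Rightarrow> complex" where
  "char_prod ch1 ch2 p x = ch1 (fst p) (fst x) * ch2 (snd p) (snd x)"

lemma char_iso_char_system:
  fixes ch :: "'g::{finite,ab_group_add} \<Rightarrow> 'g \<Rightarrow> complex"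
  assumes "char_iso ch"
  shows "char_system ch"
proof -
  have hom: "ch (a + b) x = ch a x * ch b x" for a b x
    using assms unfolding char_iso_def by metis
  have character: "is_character (ch a)" for a
    using assms bij_betw_imp_surj_on unfolding char_iso_def by blast
  then have unimodular: "cmod (ch a x) = 1" for a x
    unfolding is_character_def by blast
  have ch_0: "ch 0 x = 1" for x
    using unimodular_idem_eq_1[OF unimodular] hom[of 0 0 x] by simp
  have "(\<Sum>x\<in>UNIV. ch a x) = 0" if "a \<noteq> 0" for a
  proof -
    have "ch a \<noteq> ch 0"
      using assms that unfolding char_iso_def bij_betw_def by (metis injD)
    then obtain h where h: "ch a h \<noteq> 1" using ch_0 by fastforce
    have "(\<Sum>x\<in>UNIV. ch a x) = (\<Sum>x\<in>UNIV. ch a (x + h))"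
      by (rule sum.reindex_bij_witness[of _ "\<lambda>x. x + h" "\<lambda>x. x - h"]) auto
    also have "\<dots> = ch a h * (\<Sum>x\<in>UNIV. ch a x)"
      using character[of a] unfolding is_character_def by (simp add: sum_distrib_left mult.commute)
    finally have "(1 - ch a h) * (\<Sum>x\<in>UNIV. ch a x) = 0" by (simp add: algebra_simps)
    then show ?thesis using h by simp
  qed
  then show ?thesis
    unfolding char_system_def using hom unimodular ch_0 by simp
qed

context
  fixes ch :: "'g::{finite,ab_group_add} \<Rightarrow> 'g \<Rightarrow> complex"
  assumes ch: "char_system ch"
begin

lemma char_system_add: "ch (a + b) x = ch a x * ch b x"
  using ch unfolding char_system_def by blast

lemma char_system_norm: "cmod (ch a x) = 1"
  using ch unfolding char_system_def by blast

lemma char_system_sum: "(\<Sum>x\<in>UNIV. ch a x) = (if a = 0 then of_nat CARD('g) else 0)"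
  using ch unfolding char_system_def by blast

lemma char_system_cnj: "cnj (ch a x) = ch (- a) x"
proof -
  have "ch 0 x = 1"
    using unimodular_idem_eq_1[OF char_system_norm] char_system_add[of 0 0 x] by simp
  then have "ch a x * ch (- a) x = 1" using char_system_add[of a "- a" x] by simp
  moreover have "ch a x * cnj (ch a x) = 1"
    using char_system_norm[of a x] by (simp add: mult_cnj_eq_cmod_sq)
  ultimately show ?thesis
    using char_system_norm[of a x] by (metis mult_cancel_left norm_zero zero_neq_one)
qed

lemma char_system_orthogonal:
  "(\<Sum>x\<in>UNIV. ch a x * cnj (ch b x)) = (if a = b then of_nat CARD('g) else 0)"
  by (simp add: char_system_cnj char_system_add[symmetric] char_system_sum)

lemma char_system_quadruple: "ch a x * cnj (ch b x) * (ch c x * cnj (ch e x)) = ch (a - b + c - e) x"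
proof -
  have "a - b + c - e = a + - b + (c + - e)" by (simp add: algebra_simps)
  then show ?thesis by (simp only: char_system_cnj char_system_add)
qed

lemma char_expansion_sum_sq:
  "(\<Sum>x\<in>UNIV. (cmod (\<Sum>a\<in>UNIV. c a * ch a x))^2) = real CARD('g) * (\<Sum>a\<in>UNIV. (cmod (c a))^2)"
proof -
  have "complex_of_real (\<Sum>x\<in>UNIV. (cmod (\<Sum>a\<in>UNIV. c a * ch a x))^2) =
      (\<Sum>x\<in>UNIV. \<Sum>a\<in>UNIV. \<Sum>b\<in>UNIV. c a * cnj (c b) * (ch a x * cnj (ch b x)))"
    by (simp only: of_real_sum of_real_power mult_cnj_eq_cmod_sq[symmetric] sum_mult_cnj_sum)
  also have "\<dots> = (\<Sum>a\<in>UNIV. \<Sum>b\<in>UNIV. c a * cnj (c b) * (if a = b then of_nat CARD('g) else 0))"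
    by (simp only: sum_swap_nested2 sum_distrib_left[symmetric] char_system_orthogonal)
  also have "\<dots> = complex_of_real (real CARD('g) * (\<Sum>a\<in>UNIV. (cmod (c a))^2))"
    by (simp add: if_distrib[of "\<lambda>z. _ * z"] mult_cnj_eq_cmod_sq sum_distrib_left mult_ac cong: if_cong)
  finally show ?thesis by (simp only: of_real_eq_iff)
qed

lemma char_expansion_sum_pow4:
  "(\<Sum>x\<in>UNIV. (cmod (\<Sum>a\<in>UNIV. complex_of_real (r a) * ch a x))^4) = real CARD('g) * additive_energy r"
proof -
  let ?c = "\<lambda>a. complex_of_real (r a)"
  have "complex_of_real (\<Sum>x\<in>UNIV. (cmod (\<Sum>a\<in>UNIV. ?c a * ch a x))^4) =
      (\<Sum>x\<in>UNIV. \<Sum>a\<in>UNIV. \<Sum>b\<in>UNIV. \<Sum>c\<in>UNIV. \<Sum>e\<in>UNIV.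
        ?c a * cnj (?c b) * (ch a x * cnj (ch b x)) * (?c c * cnj (?c e) * (ch c x * cnj (ch e x))))"
    by (simp only: of_real_sum complex_of_real_cmod_pow4 sum_mult_cnj_sum sum_sum_mult_sum_sum)
  also have "\<dots> = (\<Sum>a\<in>UNIV. \<Sum>b\<in>UNIV. \<Sum>c\<in>UNIV. \<Sum>e\<in>UNIV. \<Sum>x\<in>UNIV.
        ?c a * cnj (?c b) * (ch a x * cnj (ch b x)) * (?c c * cnj (?c e) * (ch c x * cnj (ch e x))))"
    by (rule sum_swap_nested4)
  also have "\<dots> = (\<Sum>a\<in>UNIV. \<Sum>b\<in>UNIV. \<Sum>c\<in>UNIV. \<Sum>e\<in>UNIV. \<Sum>x\<in>UNIV.
      ?c a * ?c b * ?c c * ?c e * ch (a - b + c - e) x)"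
    by (intro sum.cong refl) (simp add: char_system_quadruple[symmetric] mult_ac)
  also have "\<dots> = (\<Sum>a\<in>UNIV. \<Sum>b\<in>UNIV. \<Sum>c\<in>UNIV. \<Sum>e\<in>UNIV.
      ?c a * ?c b * ?c c * ?c e * (if a - b + c - e = 0 then of_nat CARD('g) else 0))"
    by (simp only: sum_distrib_left[symmetric] char_system_sum)
  also have "\<dots> = (\<Sum>a\<in>UNIV. \<Sum>b\<in>UNIV. \<Sum>c\<in>UNIV. \<Sum>e\<in>UNIV.
      complex_of_real (real CARD('g) * (r a * r b * r c * r e * (if a - b + c - e = 0 then 1 else 0))))"
    by (intro sum.cong refl) simp
  also have "\<dots> = complex_of_real (real CARD('g) * additive_energy r)"
    by (simp only: additive_energy_def of_real_sum sum_distrib_left)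
  finally show ?thesis by (simp only: of_real_eq_iff)
qed

lemma cnorm2_char_expansion:
  "cnorm 2 (\<lambda>x. \<Sum>a\<in>UNIV. c a * ch a x) = (\<Sum>a\<in>UNIV. (cmod (c a))^2) powr (1/2)"
  by (simp add: cnorm_def char_expansion_sum_sq)

lemma cnorm4_char_expansion:
  "cnorm 4 (\<lambda>x. \<Sum>a\<in>UNIV. complex_of_real (r a) * ch a x) = additive_energy r powr (1/4)"
  by (simp add: cnorm_def char_expansion_sum_pow4)

end

lemma char_system_char_prod:
  fixes ch1 :: "'a::{finite,ab_group_add} \<Rightarrow> 'a \<Rightarrow> complex" and ch2 :: "'b::{finite,ab_group_add} \<Rightarrow> 'b \<Rightarrow> complex"
  assumes ch1: "char_system ch1" and ch2: "char_system ch2"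
  shows "char_system (char_prod ch1 ch2)"
proof -
  have "(\<Sum>x\<in>UNIV. char_prod ch1 ch2 p x) = (if p = 0 then of_nat CARD('a \<times> 'b) else 0)" for p
    by (simp add: char_prod_def sum_UNIV_prod sum_product[symmetric] char_system_sum[OF ch1]
        char_system_sum[OF ch2] prod_eq_iff)
  then show ?thesis
    unfolding char_system_def
    by (auto simp: char_prod_def char_system_add[OF ch1] char_system_add[OF ch2]
        char_system_norm[OF ch1] char_system_norm[OF ch2] norm_mult)
qed

definition diagonal_on_chars ::
  "('g \<Rightarrow> 'g \<Rightarrow> complex) \<Rightarrow> ('g::finite \<Rightarrow> complex) \<Rightarrow> (('g \<Rightarrow> complex) \<Rightarrow> 'g \<Rightarrow> complex) \<Rightarrow> bool" where
  "diagonal_on_chars ch m T \<longleftrightarrow>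
     (\<forall>c. T (\<lambda>x. \<Sum>a\<in>UNIV. c a * ch a x) = (\<lambda>x. \<Sum>a\<in>UNIV. (m a * c a) * ch a x))"

lemma fourier_delta_fun: "fourier ch (delta_fun h) a = cnj (ch a h) / of_nat CARD('g)"
  for ch :: "'g::finite \<Rightarrow> 'g \<Rightarrow> complex"
  by (simp add: fourier_def delta_fun_def if_distrib[of "\<lambda>z. _ * z"] cong: if_cong)

lemma classical_sg_kernel_char:
  fixes ch :: "'g::{finite,ab_group_add} \<Rightarrow> 'g \<Rightarrow> complex"
  assumes ch: "char_system ch"
  shows "(\<Sum>h\<in>UNIV. ch a h * classical_sg ch lam t (delta_fun h) x) = exp (lam a * of_real t) * ch a x"
proof -
  let ?E = "\<lambda>b. exp (lam b * of_real t)" and ?N = "of_nat CARD('g) :: complex"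
  have "(\<Sum>h\<in>UNIV. ch a h * classical_sg ch lam t (delta_fun h) x) =
      (\<Sum>h\<in>UNIV. \<Sum>b\<in>UNIV. (?E b * ch b x / ?N) * (ch a h * cnj (ch b h)))"
    by (simp add: classical_sg_def fourier_delta_fun sum_distrib_left mult_ac)
  also have "\<dots> = (\<Sum>b\<in>UNIV. (?E b * ch b x / ?N) * (if a = b then ?N else 0))"
    by (subst sum.swap) (simp only: sum_distrib_left[symmetric] char_system_orthogonal[OF ch])
  also have "\<dots> = ?E a * ch a x"
    by (simp add: if_distrib[of "\<lambda>z. _ * z"] cong: if_cong)
  finally show ?thesis .
qed

lemma fun_tensor_diagonal_on_chars:
  fixes ch1 :: "'a::finite \<Rightarrow> 'a \<Rightarrow> complex" and ch2 :: "'b::finite \<Rightarrow> 'b \<Rightarrow> complex"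
  assumes A: "\<And>a x. (\<Sum>h\<in>UNIV. ch1 a h * A (delta_fun h) x) = m1 a * ch1 a x"
    and B: "\<And>b x. (\<Sum>h\<in>UNIV. ch2 b h * B (delta_fun h) x) = m2 b * ch2 b x"
  shows "diagonal_on_chars (char_prod ch1 ch2) (\<lambda>p. m1 (fst p) * m2 (snd p)) (fun_tensor A B)"
proof -
  have "fun_tensor A B (\<lambda>x. \<Sum>p\<in>UNIV. c p * char_prod ch1 ch2 p x) (g1, g2) =
      (\<Sum>p\<in>UNIV. (m1 (fst p) * m2 (snd p) * c p) * char_prod ch1 ch2 p (g1, g2))" for c g1 g2
  proof -
    have "fun_tensor A B (\<lambda>x. \<Sum>p\<in>UNIV. c p * char_prod ch1 ch2 p x) (g1, g2) =
        (\<Sum>h1\<in>UNIV. \<Sum>h2\<in>UNIV. \<Sum>a\<in>UNIV. \<Sum>b\<in>UNIV.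
          c (a, b) * (ch1 a h1 * ch2 b h2) * A (delta_fun h1) g1 * B (delta_fun h2) g2)"
      by (simp add: fun_tensor_def char_prod_def sum_UNIV_prod sum_distrib_right)
    also have "\<dots> = (\<Sum>h1\<in>UNIV. \<Sum>a\<in>UNIV. \<Sum>b\<in>UNIV. \<Sum>h2\<in>UNIV.
          c (a, b) * (ch1 a h1 * ch2 b h2) * A (delta_fun h1) g1 * B (delta_fun h2) g2)"
      by (intro sum.cong refl sum_swap_nested2)
    also have "\<dots> = (\<Sum>a\<in>UNIV. \<Sum>b\<in>UNIV. \<Sum>h1\<in>UNIV. \<Sum>h2\<in>UNIV.
          c (a, b) * (ch1 a h1 * ch2 b h2) * A (delta_fun h1) g1 * B (delta_fun h2) g2)"
      by (rule sum_swap_nested2)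
    also have "\<dots> = (\<Sum>a\<in>UNIV. \<Sum>b\<in>UNIV. c (a, b) * (\<Sum>h1\<in>UNIV. ch1 a h1 * A (delta_fun h1) g1) *
          (\<Sum>h2\<in>UNIV. ch2 b h2 * B (delta_fun h2) g2))"
      by (intro sum.cong refl) (simp add: sum_product sum_distrib_left mult_ac)
    also have "\<dots> = (\<Sum>p\<in>UNIV. (m1 (fst p) * m2 (snd p) * c p) * char_prod ch1 ch2 p (g1, g2))"
      by (simp add: A B sum_UNIV_prod char_prod_def mult_ac)
    finally show ?thesis .
  qed
  then show ?thesis
    unfolding diagonal_on_chars_def by (simp add: fun_eq_iff)
qed

lemma fun_tensor_classical_sg_diagonal_on_chars:
  assumes "char_system ch1" "char_system ch2"
  shows "diagonal_on_chars (char_prod ch1 ch2) (\<lambda>p. exp (lam (fst p) * of_real t) * exp (mu (snd p) * of_real t))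
           (fun_tensor (classical_sg ch1 lam t) (classical_sg ch2 mu t))"
  by (intro fun_tensor_diagonal_on_chars classical_sg_kernel_char assms)

lemma fun_tensor_kernel:
  "fun_tensor A B F x = (\<Sum>h\<in>UNIV. F h * (A (delta_fun (fst h)) (fst x) * B (delta_fun (snd h)) (snd x)))"
  by (cases x) (simp add: fun_tensor_def sum_UNIV_prod mult_ac)

lemma cnorm_le_bound:
  fixes g :: "'g::finite \<Rightarrow> complex"
  assumes "p > 0" "B \<ge> 0" "\<And>x. cmod (g x) \<le> B"
  shows "cnorm p g \<le> B"
proof -
  have "(\<Sum>x\<in>UNIV. cmod (g x) ^ p) \<le> (\<Sum>x\<in>(UNIV :: 'g set). B ^ p)"
    using assms by (intro sum_mono power_mono) auto
  then have "(\<Sum>x\<in>UNIV. cmod (g x) ^ p) / real CARD('g) \<le> B ^ p"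
    by (simp add: divide_le_eq mult.commute)
  then have "cnorm p g \<le> (B ^ p) powr (1 / real p)"
    unfolding cnorm_def using assms by (intro powr_mono2) (auto intro!: sum_nonneg divide_nonneg_nonneg)
  then show ?thesis using assms pow_powr_inverse by simp
qed

lemma cmod_le_cnorm2: "cmod (f h) \<le> sqrt (real CARD('g)) * cnorm 2 f"
  for f :: "'g::finite \<Rightarrow> complex"
proof -
  let ?S = "\<Sum>x\<in>UNIV. cmod (f x) ^ 2"
  have "cmod (f h) ^ 2 \<le> ?S" by (rule member_le_sum) auto
  then have "cmod (f h) \<le> sqrt ?S" by (simp add: real_le_rsqrt)
  also have "\<dots> = sqrt (real CARD('g)) * cnorm 2 f"
    by (simp add: cnorm_def powr_half_sqrt sum_nonneg real_sqrt_divide)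
  finally show ?thesis .
qed

lemma bdd_above_ratio_kernel:
  fixes T :: "('g::finite \<Rightarrow> complex) \<Rightarrow> 'g \<Rightarrow> complex"
  assumes T: "\<And>F x. T F x = (\<Sum>h\<in>UNIV. F h * K h x)"
  shows "bdd_above {cnorm 4 (T f) / cnorm 2 f | f. f \<noteq> (\<lambda>_. 0)}"
proof -
  define M where "M = sqrt (real CARD('g)) * (\<Sum>h\<in>UNIV. \<Sum>x\<in>UNIV. cmod (K h x))"
  have "M \<ge> 0" unfolding M_def by (simp add: sum_nonneg)
  have "cnorm 4 (T f) / cnorm 2 f \<le> M" if "f \<noteq> (\<lambda>_. 0)" for f
  proof -
    obtain h where "f h \<noteq> 0" using \<open>f \<noteq> (\<lambda>_. 0)\<close> by auto
    then have "0 < sqrt (real CARD('g)) * cnorm 2 f"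
      using cmod_le_cnorm2[of f h] by (meson less_le_trans zero_less_norm_iff)
    then have pos: "cnorm 2 f > 0" by (simp add: zero_less_mult_iff)
    have "cmod (T f x) \<le> M * cnorm 2 f" for x
    proof -
      have "cmod (T f x) \<le> (\<Sum>h\<in>UNIV. cmod (f h) * cmod (K h x))"
        unfolding T by (rule order_trans[OF norm_sum]) (simp add: norm_mult)
      also have "\<dots> \<le> (\<Sum>h\<in>UNIV. sqrt (real CARD('g)) * cnorm 2 f * (\<Sum>y\<in>UNIV. cmod (K h y)))"
        using pos by (intro sum_mono mult_mono cmod_le_cnorm2 member_le_sum) simp_all
      also have "\<dots> = M * cnorm 2 f"
        by (simp add: M_def sum_distrib_left mult_ac)
      finally show ?thesis .
    qed
    then have "cnorm 4 (T f) \<le> M * cnorm 2 f"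
      using pos \<open>M \<ge> 0\<close> by (intro cnorm_le_bound) auto
    then show ?thesis using pos by (simp add: divide_le_eq)
  qed
  then show ?thesis unfolding bdd_above_def by blast
qed

section \<open>Comparison of the hypercontractivity constants\<close>

lemma qnorm_ratio_le_cnorm_ratio:
  fixes W :: "'g::{finite,ab_group_add} \<Rightarrow> complex^'m^'m" and ch :: "'g \<Rightarrow> 'g \<Rightarrow> complex"
  assumes W: "nice_error_basis W" and ch: "char_system ch" and \<rho>: "\<And>a. \<rho> a \<ge> 0"
    and S: "diagonal_in W (\<lambda>a. of_real (\<rho> a)) S" and T: "diagonal_on_chars ch (\<lambda>a. of_real (\<rho> a)) T"
    and "X \<noteq> 0"
  obtains f where "f \<noteq> (\<lambda>_. 0)" "qnorm4 (S X) / qnorm2 X \<le> cnorm 4 (T f) / cnorm 2 f"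
proof
  define r where "r a = cmod (hs_coeff (W a) X)" for a
  define f where "f x = (\<Sum>a\<in>UNIV. complex_of_real (r a) * ch a x)" for x
  have f_norm2: "cnorm 2 f = qnorm2 X"
    unfolding f_def cnorm2_char_expansion[OF ch] by (simp add: r_def qnorm2_nice_error_basis[OF W])
  have "qnorm4 (S X) \<le> additive_energy (\<lambda>a. \<rho> a * r a) powr (1/4)"
    using S qnorm4_diagonal_le[OF W \<rho>, where c="\<lambda>a. hs_coeff (W a) X"] by (simp add: diagonal_in_def r_def)
  also have "\<dots> = cnorm 4 (\<lambda>x. \<Sum>a\<in>UNIV. complex_of_real (\<rho> a * r a) * ch a x)"
    by (rule cnorm4_char_expansion[OF ch, symmetric])
  also have "\<dots> = cnorm 4 (T f)"
    using T unfolding diagonal_on_chars_def f_def by (simp add: mult.assoc)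
  finally show "qnorm4 (S X) / qnorm2 X \<le> cnorm 4 (T f) / cnorm 2 f"
    by (simp add: f_norm2 divide_right_mono qnorm2_def)
  show "f \<noteq> (\<lambda>_. 0)"
  proof
    assume "f = (\<lambda>_. 0)"
    then have "(\<Sum>a\<in>UNIV. (cmod (hs_coeff (W a) X))^2) = 0"
      using f_norm2 by (simp add: cnorm_def qnorm2_nice_error_basis[OF W])
    then have "hs_coeff (W a) X = 0" for a
      by (simp add: sum_nonneg_eq_0_iff)
    then have "X = 0" by (subst nice_error_basis_expansion[OF W]) simp
    with \<open>X \<noteq> 0\<close> show False ..
  qed
qed

lemma qnorm_2to4_le_cnorm_2to4:
  fixes S :: "complex^'m^'m \<Rightarrow> complex^'m^'m" and T :: "('g::finite \<Rightarrow> complex) \<Rightarrow> 'g \<Rightarrow> complex"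
  assumes dominated: "\<And>X. X \<noteq> 0 \<Longrightarrow> \<exists>f. f \<noteq> (\<lambda>_. 0) \<and> qnorm4 (S X) / qnorm2 X \<le> cnorm 4 (T f) / cnorm 2 f"
    and bdd: "bdd_above {cnorm 4 (T f) / cnorm 2 f | f. f \<noteq> (\<lambda>_. 0)}"
  shows "qnorm_2to4 S \<le> cnorm_2to4 T"
  unfolding qnorm_2to4_def cnorm_2to4_def
proof (rule cSup_mono[OF _ bdd])
  show "{qnorm4 (S X) / qnorm2 X |X. X \<noteq> 0} \<noteq> {}"
    using mat_1_nonzero by blast
qed (use dominated in blast)

theorem mainTheorem20:
  fixes L1 :: "complex^'n1^'n1 \<Rightarrow> complex^'n1^'n1"
    and L2 :: "complex^'n2^'n2 \<Rightarrow> complex^'n2^'n2"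
    and U1 :: "'g1::{finite,ab_group_add} \<Rightarrow> complex^'n1^'n1"
    and U2 :: "'g2::{finite,ab_group_add} \<Rightarrow> complex^'n2^'n2"
    and lam1 :: "'g1 \<Rightarrow> complex" and lam2 :: "'g2 \<Rightarrow> complex"
    and chi1 :: "'g1 \<Rightarrow> 'g1 \<Rightarrow> complex" and chi2 :: "'g2 \<Rightarrow> 'g2 \<Rightarrow> complex"
    and t :: real
  assumes "liouvillian L1" "unital_so L1" "reversible_so L1"
    and "liouvillian L2" "unital_so L2" "reversible_so L2"
    and "acu_eigenbasis L1 U1 lam1" "acu_eigenbasis L2 U2 lam2"
    and "char_iso chi1" "char_iso chi2"
    and "t \<ge> 0"
  shows "qnorm_2to4 (super_tensor (exp_so t L1) (exp_so t L2))
           \<le> cnorm_2to4 (fun_tensor (classical_sg chi1 lam1 t) (classical_sg chi2 lam2 t))"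
proof -
  have lin: "clinear_so L1" "clinear_so L2"
    using assms(1,4) unfolding liouvillian_def by auto
  have nice: "nice_error_basis U1" "nice_error_basis U2"
    using assms(7,8) by (auto intro: acu_eigenbasis_nice_error_basis)
  have chars: "char_system chi1" "char_system chi2"
    using assms(9,10) by (auto intro: char_iso_char_system)
  define \<rho> where "\<rho> p = exp (Re (lam1 (fst p)) * t) * exp (Re (lam2 (snd p)) * t)" for p
  have \<rho>_nonneg: "\<rho> p \<ge> 0" for p by (simp add: \<rho>_def)
  have multiplier: "exp (lam1 (fst p) * of_real t) * exp (lam2 (snd p) * of_real t) = of_real (\<rho> p)" for p
    by (simp add: \<rho>_def reversible_so_exp_eigenvalue_real[OF assms(3,7)]
        reversible_so_exp_eigenvalue_real[OF assms(6,8)])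
  have S: "diagonal_in (kron_basis U1 U2) (\<lambda>p. of_real (\<rho> p)) (super_tensor (exp_so t L1) (exp_so t L2))"
    using super_tensor_diagonal_in[OF nice exp_so_diagonal_in[OF lin(1) assms(7), where t=t]
        exp_so_diagonal_in[OF lin(2) assms(8), where t=t]]
    by (simp add: multiplier)
  have T: "diagonal_on_chars (char_prod chi1 chi2) (\<lambda>p. of_real (\<rho> p))
      (fun_tensor (classical_sg chi1 lam1 t) (classical_sg chi2 lam2 t))"
    using fun_tensor_classical_sg_diagonal_on_chars[OF chars, where lam=lam1 and mu=lam2 and t=t]
    by (simp add: multiplier)
  have "\<exists>f. f \<noteq> (\<lambda>_. 0) \<and>
      qnorm4 (super_tensor (exp_so t L1) (exp_so t L2) X) / qnorm2 X \<le>
      cnorm 4 (fun_tensor (classical_sg chi1 lam1 t) (classical_sg chi2 lam2 t) f) / cnorm 2 f"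
    if "X \<noteq> 0" for X
    using qnorm_ratio_le_cnorm_ratio[OF nice_error_basis_kron[OF nice] char_system_char_prod[OF chars]
        \<rho>_nonneg S T that] by blast
  then show ?thesis
    by (intro qnorm_2to4_le_cnorm_2to4 bdd_above_ratio_kernel[OF fun_tensor_kernel])
qed

end
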